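(* Let $k,\ell\in\mathbb N$ with $\ell\le k$, $G\in\mathscr S^{(k)}$, $H\in\mathscr S^{(\ell)}$, and let $\eta$ be a configuration with at most polynomial growth. Then for all $N\in\mathbb N$, $$\langle G,\mathscr X^{(k)N}\rangle\,\langle H,\mathscr X^{(\ell)N}\rangle=\sum_{h=0}^{\ell}\frac{1}{N^{(k+\ell)d}}\sum_{\mathbf x\in(\mathbb Z^d)^k}\sum_{\mathbf y\in(\mathbb Z^d)^\ell}G(\tfrac{\mathbf x}{N})H(\tfrac{\mathbf y}{N})\{\eta|(\mathbf x,\mathbf y)\}^{(k+\ell-h)},$$ where $$\{\eta|(\mathbf x,\mathbf y)\}^{(k+\ell-h)}:=\sum_{\substack{\mathcal J\subseteq\{1,\dots,\ell\}\\|\mathcal J|=h}}[\eta]_{\mathbf x\,\widehat{\mathbf y}_{\mathcal J}}\sum_{\substack{i:\mathcal J\to\{1,\dots,k\}\\ \text{one-to-one}}}\prod_{j\in\mathcal J}\mathbf 1_{\{y_j=x_{i_j}\}}.$$ Moreover, for each $h\in\{0,\dots,\ell\}$ there is a function $\{G\otimes H\}^{(k+\ell-h)}\in\mathscr S^{(k+\ell-h)}$ (independent of $\eta$) such that the $h$-th summand equals $N^{-hd}\langle\{G\otimes H\}^{(k+\ell-h)},\mathscr X^{(k+\ell-h)N}\rangle$, i.e. $\langle\{G\otimes H\}^{(k+\ell-h)},\mathscr X^{(k+\ell-h)N}\rangle=N^{-(k+\ell-h)d}\sum_{\mathbf x}\sum_{\mathbf y}G(\tfrac{\mathbf x}{N})H(\tfrac{\mathbf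 y}{N})\{\eta|(\mathbf x,\mathbf y)\}^{(k+\ell-h)}$.
   Context: $\eta\in\mathbb N_0^{\mathbb Z^d}$ with $\eta(x)\le m(1+|x|)^n$ for all $x$ for some $m,n$. For $\mathbf x=(x_1,\dots,x_k)\in(\mathbb Z^d)^k$, $[\eta]_{\mathbf x}:=\eta(x_1)(\eta(x_2)-\mathbf 1_{\{x_2=x_1\}})\cdots(\eta(x_k)-\sum_{j<k}\mathbf 1_{\{x_k=x_j\}})$. $\mathscr S^{(k)}:=\mathscr S(\mathbb R^{kd})$; $\langle G,\mathscr X^{(k)N}\rangle:=N^{-kd}\sum_{\mathbf x\in(\mathbb Z^d)^k}G(\mathbf x/N)[\eta]_{\mathbf x}$. For $\mathbf x\in(\mathbb Z^d)^k$, $\mathbf y=(y_1,\dots,y_\ell)\in(\mathbb Z^d)^\ell$ and $\mathcal J\subseteq\{1,\dots,\ell\}$, $\mathbf x\,\widehat{\mathbf y}_{\mathcal J}\in(\mathbb Z^d)^{k+\ell-|\mathcal J|}$ denotes the concatenation of $\mathbf x$ with the tuple obtained from $\mathbf y$ by deleting the entries $y_j$, $j\in\mathcal J$ (order otherwise preserved); for $h=0$ the only term is $\mathcal J=\emptyset$ with empty product $1$. *)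

theory Defs
  imports "HOL-Analysis.Analysis"
begin

text \<open>Sites of \<open>\<int>^d\<close> are \<open>int^'d\<close> (the dimension d is \<open>CARD('d)\<close>);
  points of \<open>\<real>^d\<close> are \<open>real^'d\<close>. A k-tuple is a list of length k,
  so \<open>(\<int>^d)^k\<close> is \<open>{xs. length xs = k}\<close> and \<open>\<real>^{kd}\<close> is the set of
  lists of \<open>real^'d\<close> of length k.\<close>

definition rvec :: "int^'d \<Rightarrow> real^'d" where
  "rvec z = (\<chi> i. real_of_int (z $ i))"

definition tuples :: "nat \<Rightarrow> 'a list set" where
  "tuples k = {xs. length xs = k}"

definition poly_growth :: "(int^'d \<Rightarrow> nat) \<Rightarrow> bool" where
  "poly_growth \<eta> \<longleftrightarrow> (\<exists>m::real. \<exists>n::nat. \<forall>x. real (\<eta> x) \<le> m * (1 + norm (rvec x)) ^ n)"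

text \<open>Schwartz class on \<open>\<real>^{kd}\<close>: continuous, rapidly decreasing, and every
  first-order partial derivative exists everywhere and is again in the class
  (coinductively: all partial derivatives of all orders exist, are continuous
  and rapidly decreasing).\<close>
coinductive schwartz :: "nat \<Rightarrow> ((real^'d) list \<Rightarrow> real) \<Rightarrow> bool" where
  "\<lbrakk> \<forall>xs\<in>tuples k. \<forall>e>0. \<exists>\<delta>>0. \<forall>ys\<in>tuples k.
        (\<Sum>j<k. norm (ys!j - xs!j)) < \<delta> \<longrightarrow> \<bar>G ys - G xs\<bar> < e;
     \<forall>m::nat. \<exists>C. \<forall>xs\<in>tuples k. (1 + (\<Sum>j<k. norm (xs!j))) ^ m * \<bar>G xs\<bar> \<le> C;
     \<forall>j<k. \<forall>c::'d. \<exists>G'. (\<forall>xs\<in>tuples k.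
        ((\<lambda>t. G (xs[j := xs!j + t *\<^sub>R axis c 1])) has_real_derivative G' xs) (at 0))
        \<and> schwartz k G' \<rbrakk>
   \<Longrightarrow> schwartz k G"

definition falling :: "(int^'d \<Rightarrow> nat) \<Rightarrow> (int^'d) list \<Rightarrow> real" where
  "falling \<eta> xs = (\<Prod>i<length xs. real (\<eta> (xs!i)) - real (card {j. j < i \<and> xs!j = xs!i}))"

definition scale :: "nat \<Rightarrow> (int^'d) list \<Rightarrow> (real^'d) list" where
  "scale N xs = map (\<lambda>z. (1 / real N) *\<^sub>R rvec z) xs"

definition pairing :: "nat \<Rightarrow> ((real^'d) list \<Rightarrow> real) \<Rightarrow> (int^'d \<Rightarrow> nat) \<Rightarrow> nat \<Rightarrow> real" where
  "pairing k G \<eta> N = (1 / real N ^ (k * CARD('d))) *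
     infsum (\<lambda>xs. G (scale N xs) * falling \<eta> xs) (tuples k)"

text \<open>\<open>x \<hat>y_J\<close> (indices of y are 0-based).\<close>
definition concat_del :: "'a list \<Rightarrow> 'a list \<Rightarrow> nat set \<Rightarrow> 'a list" where
  "concat_del xs ys J = xs @ [ys!j. j \<leftarrow> [0..<length ys], j \<notin> J]"

definition brace :: "(int^'d \<Rightarrow> nat) \<Rightarrow> nat \<Rightarrow> (int^'d) list \<Rightarrow> (int^'d) list \<Rightarrow> real" where
  "brace \<eta> h xs ys =
     (\<Sum>J\<in>{J. J \<subseteq> {..<length ys} \<and> card J = h}.
        falling \<eta> (concat_del xs ys J) *
        (\<Sum>i\<in>{i\<in>J \<rightarrow>\<^sub>E {..<length xs}. inj_on i J}.
           \<Prod>j\<in>J. (if ys!j = xs!(i j) then 1 else 0)))"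

definition summand :: "nat \<Rightarrow> nat \<Rightarrow> ((real^'d) list \<Rightarrow> real) \<Rightarrow> ((real^'d) list \<Rightarrow> real)
    \<Rightarrow> (int^'d \<Rightarrow> nat) \<Rightarrow> nat \<Rightarrow> nat \<Rightarrow> real" where
  "summand k l G H \<eta> N h = (1 / real N ^ ((k + l) * CARD('d))) *
     infsum (\<lambda>xs. infsum (\<lambda>ys. G (scale N xs) * H (scale N ys) * brace \<eta> h xs ys) (tuples l))
       (tuples k)"

end

(* Expanding [eta]_x [eta]_y one factor of [eta]_y at a time, each factor either counts a
   particle not counted so far, which lengthens the tuple, or is absorbed by a particle
   already counted in [eta]_x.  Recording the set J of absorbed entries of y and the injection
   i telling which entries of x absorb them gives [eta]_x [eta]_y as a sum over (J, i) of
   [eta] evaluated on the glued tuple z = x y^_J.  Summed against G(x/N) H(y/N), the term of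
   (J, i) becomes a sum over z of G and H evaluated on two sub-tuples of z/N that together
   cover z, and the sum of these products over (J, i) is {G (x) H}.  Such products of Schwartz
   functions are again Schwartz functions, since their partial derivatives are sums of
   products of the same kind, and a Schwartz function of z/N against [eta]_z is absolutely
   summable when eta grows polynomially; this justifies every rearrangement of the sums. *)

theory Submission
  imports Defs
begin

section \<open>The product of two factorial moments\<close>

definition kept_indices :: "nat set \<Rightarrow> nat \<Rightarrow> nat list" where
  "kept_indices J l = filter (\<lambda>j. j \<notin> J) [0..<l]"

definition kept_rank :: "nat set \<Rightarrow> nat \<Rightarrow> nat" where
  "kept_rank J j = card {j'. j' < j \<and> j' \<notin> J}"

lemma concat_del_eq: "concat_del xs ys J = xs @ map ((!) ys) (kept_indices J (length ys))"
proof -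
  have "concat (map (\<lambda>j. if j \<notin> J then [f j] else []) js) = map f (filter (\<lambda>j. j \<notin> J) js)"
    for f :: "nat \<Rightarrow> 'a" and js
    by (induction js) auto
  then show ?thesis by (simp add: concat_del_def kept_indices_def)
qed

lemma set_kept_indices: "set (kept_indices J l) = {j. j < l \<and> j \<notin> J}"
  by (auto simp: kept_indices_def)

lemma length_kept_indices_conv_card: "length (kept_indices J l) = card {j. j < l \<and> j \<notin> J}"
  by (metis distinct_card distinct_filter distinct_upt kept_indices_def set_kept_indices)

lemma length_kept_indices: "J \<subseteq> {..<l} \<Longrightarrow> length (kept_indices J l) = l - card J"
proof -
  assume "J \<subseteq> {..<l}"
  moreover have "{j. j < l \<and> j \<notin> J} = {..<l} - J" by auto
  ultimately show ?thesis by (simp add: length_kept_indices_conv_card card_Diff_subset finite_subset)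
qed

lemma kept_indices_Suc: "kept_indices J (Suc l) = kept_indices J l @ (if l \<in> J then [] else [l])"
  by (simp add: kept_indices_def)

lemma map_kept_rank_kept_indices:
  "map (kept_rank J) (kept_indices J l) = [0..<length (kept_indices J l)]"
proof (induction l)
  case 0
  then show ?case by (simp add: kept_indices_def)
next
  case (Suc l)
  have "kept_rank J l = length (kept_indices J l)"
    by (simp add: kept_rank_def length_kept_indices_conv_card)
  with Suc show ?case by (simp add: kept_indices_Suc)
qed

lemma kept_rank_kept_indices_nth:
  "q < length (kept_indices J l) \<Longrightarrow> kept_rank J (kept_indices J l ! q) = q"
  using map_kept_rank_kept_indices[of J l] by (metis diff_zero length_upt nth_map nth_upt add_0)

lemma kept_indices_nth_kept_rank:
  assumes "j < l" "j \<notin> J"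
  shows "kept_rank J j < length (kept_indices J l)" "kept_indices J l ! kept_rank J j = j"
proof -
  obtain q where "q < length (kept_indices J l)" "kept_indices J l ! q = j"
    using assms by (metis in_set_conv_nth mem_Collect_eq set_kept_indices)
  then show "kept_rank J j < length (kept_indices J l)" "kept_indices J l ! kept_rank J j = j"
    using kept_rank_kept_indices_nth by auto
qed

lemma count_list_conv_card: "count_list xs x = card {j. j < length xs \<and> xs ! j = x}"
  by (simp add: count_list_eq_length_filter length_filter_conv_card eq_commute)

lemma falling_Nil [simp]: "falling \<eta> [] = 1"
  by (simp add: falling_def)

lemma falling_snoc: "falling \<eta> (zs @ [y]) = falling \<eta> zs * (real (\<eta> y) - real (count_list zs y))"
proof -
  let ?f = "\<lambda>zs i. real (\<eta> (zs ! i)) - real (card {j. j < i \<and> zs ! j = zs ! i})"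
  have "?f (zs @ [y]) i = ?f zs i" if "i < length zs" for i
  proof -
    have "{j. j < i \<and> (zs @ [y]) ! j = (zs @ [y]) ! i} = {j. j < i \<and> zs ! j = zs ! i}"
      using that by (auto simp: nth_append)
    then show ?thesis using that by (simp add: nth_append)
  qed
  moreover have "?f (zs @ [y]) (length zs) = real (\<eta> y) - real (count_list zs y)"
  proof -
    have "{j. j < length zs \<and> (zs @ [y]) ! j = y} = {j. j < length zs \<and> zs ! j = y}"
      by (auto simp: nth_append)
    then show ?thesis by (simp add: count_list_conv_card)
  qed
  ultimately show ?thesis
    unfolding falling_def length_append_singleton prod.lessThan_Suc
    by (metis (no_types, lifting) lessThan_iff prod.cong)
qed

definition matchings :: "'a list \<Rightarrow> 'a list \<Rightarrow> nat set \<Rightarrow> (nat \<Rightarrow> nat) set" where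
  "matchings xs ys J =
     {i \<in> J \<rightarrow>\<^sub>E {..<length xs}. inj_on i J \<and> (\<forall>j\<in>J. ys ! j = xs ! i j)}"

lemma finite_matchings: "finite J \<Longrightarrow> finite (matchings xs ys J)"
  unfolding matchings_def by (rule finite_subset[of _ "J \<rightarrow>\<^sub>E {..<length xs}"]) (auto intro: finite_PiE)

lemma concat_del_snoc:
  assumes "J \<subseteq> {..<length ys}"
  shows "concat_del xs (ys @ [y]) J = concat_del xs ys J @ [y]"
    and "concat_del xs (ys @ [y]) (insert (length ys) J) = concat_del xs ys J"
proof -
  have "map ((!) (ys @ [y])) (kept_indices J (length ys)) = map ((!) ys) (kept_indices J (length ys))"
    by (simp add: set_kept_indices nth_append)
  moreover have "kept_indices (insert (length ys) J) (length ys) = kept_indices J (length ys)"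
    unfolding kept_indices_def by (rule filter_cong) auto
  moreover have "length ys \<notin> J" using assms by auto
  ultimately show "concat_del xs (ys @ [y]) J = concat_del xs ys J @ [y]"
    and "concat_del xs (ys @ [y]) (insert (length ys) J) = concat_del xs ys J"
    by (simp_all add: concat_del_eq kept_indices_Suc)
qed

lemma matchings_snoc: "J \<subseteq> {..<length ys} \<Longrightarrow> matchings xs (ys @ [y]) J = matchings xs ys J"
  unfolding matchings_def by (auto simp: nth_append subset_iff)

lemma matchings_snoc_insert:
  assumes J: "J \<subseteq> {..<length ys}"
  shows "matchings xs (ys @ [y]) (insert (length ys) J)
    = (\<lambda>(i, m). i(length ys := m)) `
        (SIGMA i:matchings xs ys J. {m. m < length xs \<and> m \<notin> i ` J \<and> xs ! m = y})"
    (is "?M' = ?extend ` ?S")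
proof
  let ?l = "length ys"
  have l: "?l \<notin> J" using J by auto
  show "?extend ` ?S \<subseteq> ?M'"
  proof (rule image_subsetI)
    fix p assume "p \<in> ?S"
    then obtain i m where p: "p = (i, m)" and i: "i \<in> matchings xs ys J"
      and m: "m < length xs" "m \<notin> i ` J" "xs ! m = y"
      by blast
    have "inj_on (i(?l := m)) (insert ?l J)"
      using i l m unfolding matchings_def inj_on_def by auto
    then show "?extend p \<in> ?M'"
      using p i m J l unfolding matchings_def by (auto simp: PiE_def extensional_def nth_append subset_iff)
  qed
  show "?M' \<subseteq> ?extend ` ?S"
  proof
    fix i' assume "i' \<in> ?M'"
    then have inj: "inj_on i' (insert ?l J)" and ran: "i' \<in> insert ?l J \<rightarrow>\<^sub>E {..<length xs}"
      and match: "\<forall>j\<in>insert ?l J. (ys @ [y]) ! j = xs ! i' j"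
      by (auto simp: matchings_def)
    let ?i = "i'(?l := undefined)"
    have "inj_on ?i J" using inj l by (auto simp: inj_on_def)
    moreover have "?i \<in> J \<rightarrow>\<^sub>E {..<length xs}" using ran l by (auto simp: PiE_def extensional_def)
    moreover have "\<forall>j\<in>J. ys ! j = xs ! ?i j" using match l J by (auto simp: nth_append subset_iff)
    moreover have "i' ?l \<notin> ?i ` J" using inj l by (auto simp: inj_on_def)
    moreover have "i' ?l < length xs" "xs ! i' ?l = y" using ran match by auto
    ultimately have "(?i, i' ?l) \<in> ?S" by (simp add: matchings_def)
    moreover have "i' = ?extend (?i, i' ?l)" by simp
    ultimately show "i' \<in> ?extend ` ?S" by blast
  qed
qed

lemma card_matchings_snoc_insert:
  assumes J: "J \<subseteq> {..<length ys}"
  shows "card (matchings xs (ys @ [y]) (insert (length ys) J))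
    = (\<Sum>i\<in>matchings xs ys J. card {m. m < length xs \<and> m \<notin> i ` J \<and> xs ! m = y})"
proof -
  let ?S = "SIGMA i:matchings xs ys J. {m. m < length xs \<and> m \<notin> i ` J \<and> xs ! m = y}"
  have "length ys \<notin> J" "finite J" using J finite_subset by auto
  then have "inj_on (\<lambda>(i, m). i(length ys := m)) ?S"
    by (intro inj_on_subset[OF inj_combinator'[where B = "\<lambda>_. {..<length xs}"]])
      (auto simp: matchings_def)
  then have "card (matchings xs (ys @ [y]) (insert (length ys) J)) = card ?S"
    by (simp add: matchings_snoc_insert[OF J] card_image)
  also have "\<dots> = (\<Sum>i\<in>matchings xs ys J. card {m. m < length xs \<and> m \<notin> i ` J \<and> xs ! m = y})"
    using \<open>finite J\<close> by (intro card_SigmaI) (auto simp: finite_matchings)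
  finally show ?thesis .
qed

text \<open>The copies of \<open>y\<close> that \<open>ys\<close> has at positions in \<open>J\<close> are matched injectively
  to copies of \<open>y\<close> in \<open>xs\<close>; the unmatched copies in \<open>xs\<close> make up the difference.\<close>

lemma count_list_concat_del:
  assumes J: "J \<subseteq> {..<length ys}" and i: "i \<in> matchings xs ys J"
  shows "count_list (concat_del xs ys J) y
    = count_list ys y + card {m. m < length xs \<and> m \<notin> i ` J \<and> xs ! m = y}"
proof -
  let ?matched = "{j\<in>J. ys ! j = y}" and ?kept = "{j. j < length ys \<and> j \<notin> J \<and> ys ! j = y}"
  have "finite J" using J finite_subset by blast
  have inj: "inj_on i J" and ran: "i \<in> J \<rightarrow>\<^sub>E {..<length xs}" and match: "\<forall>j\<in>J. ys ! j = xs ! i j"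
    using i by (auto simp: matchings_def)
  have "count_list (map ((!) ys) (kept_indices J (length ys))) y
      = length (filter (\<lambda>j. ys ! j = y) (kept_indices J (length ys)))"
    by (simp add: count_list_eq_length_filter filter_map o_def eq_commute)
  also have "\<dots> = card ?kept"
    by (subst distinct_card[symmetric]) (auto simp: kept_indices_def)
  finally have kept: "count_list (map ((!) ys) (kept_indices J (length ys))) y = card ?kept" .
  have "i ` ?matched \<subseteq> {m. m < length xs \<and> xs ! m = y}" using ran match by auto
  moreover have "{m. m < length xs \<and> m \<notin> i ` J \<and> xs ! m = y}
      = {m. m < length xs \<and> xs ! m = y} - i ` ?matched"
    using match by auto
  moreover have "card (i ` ?matched) = card ?matched"
    using inj by (intro card_image inj_on_subset[OF inj]) auto
  moreover have "card (i ` ?matched) \<le> card {m. m < length xs \<and> xs ! m = y}"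
    using ran match by (intro card_mono) auto
  ultimately have xs: "count_list xs y = card {m. m < length xs \<and> m \<notin> i ` J \<and> xs ! m = y} + card ?matched"
    by (simp add: count_list_conv_card card_Diff_subset finite_subset)
  have "{j. j < length ys \<and> ys ! j = y} = ?matched \<union> ?kept" using J by auto
  then have ys: "count_list ys y = card ?matched + card ?kept"
    using \<open>finite J\<close> by (simp add: count_list_conv_card card_Un_disjoint disjoint_iff)
  show ?thesis using kept xs ys by (simp add: concat_del_eq)
qed

lemma falling_concat_del_snoc:
  assumes J: "J \<subseteq> {..<length ys}"
  shows "falling \<eta> (concat_del xs (ys @ [y]) J) * card (matchings xs (ys @ [y]) J)
      + falling \<eta> (concat_del xs (ys @ [y]) (insert (length ys) J))
          * card (matchings xs (ys @ [y]) (insert (length ys) J))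
    = falling \<eta> (concat_del xs ys J) * card (matchings xs ys J) * (real (\<eta> y) - real (count_list ys y))"
proof -
  let ?z = "concat_del xs ys J"
  have "real (card (matchings xs (ys @ [y]) (insert (length ys) J)))
      = (\<Sum>i\<in>matchings xs ys J. real (card {m. m < length xs \<and> m \<notin> i ` J \<and> xs ! m = y}))"
    by (simp add: card_matchings_snoc_insert[OF J])
  also have "\<dots> = (\<Sum>i\<in>matchings xs ys J. real (count_list ?z y) - real (count_list ys y))"
    by (intro sum.cong refl) (simp add: count_list_concat_del[OF J])
  finally have card_insert: "real (card (matchings xs (ys @ [y]) (insert (length ys) J)))
      = card (matchings xs ys J) * (real (count_list ?z y) - real (count_list ys y))"
    by simp
  show ?thesis
    using J by (simp add: concat_del_snoc matchings_snoc falling_snoc card_insert algebra_simps)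
qed

lemma falling_mult_falling:
  "falling \<eta> xs * falling \<eta> ys
    = (\<Sum>J\<in>Pow {..<length ys}. falling \<eta> (concat_del xs ys J) * card (matchings xs ys J))"
proof (induction ys rule: rev_induct)
  case Nil
  have "matchings xs [] {} = {\<lambda>_. undefined}" by (auto simp: matchings_def)
  then show ?case by (simp add: concat_del_def)
next
  case (snoc y ys)
  let ?l = "length ys" and ?t = "\<lambda>ys J. falling \<eta> (concat_del xs ys J) * card (matchings xs ys J)"
  have "Pow {..<length (ys @ [y])} = Pow {..<?l} \<union> insert ?l ` Pow {..<?l}"
    by (simp add: lessThan_Suc Pow_insert)
  moreover have "inj_on (insert ?l) (Pow {..<?l})"
    by (rule inj_onI) (metis PowD insert_ident lessThan_iff less_irrefl subset_iff)
  moreover have "Pow {..<?l} \<inter> insert ?l ` Pow {..<?l} = {}" by auto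
  ultimately have "(\<Sum>J\<in>Pow {..<length (ys @ [y])}. ?t (ys @ [y]) J)
      = (\<Sum>J\<in>Pow {..<?l}. ?t (ys @ [y]) J + ?t (ys @ [y]) (insert ?l J))"
    by (simp add: sum.union_disjoint sum.reindex sum.distrib)
  also have "\<dots> = (\<Sum>J\<in>Pow {..<?l}. ?t ys J * (real (\<eta> y) - real (count_list ys y)))"
    by (intro sum.cong refl) (simp add: falling_concat_del_snoc)
  also have "\<dots> = (\<Sum>J\<in>Pow {..<?l}. ?t ys J) * (real (\<eta> y) - real (count_list ys y))"
    by (simp add: sum_distrib_right)
  also have "\<dots> = falling \<eta> xs * falling \<eta> (ys @ [y])"
    by (simp add: snoc falling_snoc)
  finally show ?case ..
qed

definition index_subsets :: "nat \<Rightarrow> nat \<Rightarrow> nat set set" where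
  "index_subsets l h = {J. J \<subseteq> {..<l} \<and> card J = h}"

definition injections :: "nat \<Rightarrow> nat set \<Rightarrow> (nat \<Rightarrow> nat) set" where
  "injections k J = {i \<in> J \<rightarrow>\<^sub>E {..<k}. inj_on i J}"

lemma finite_index_subsets: "finite (index_subsets l h)"
  by (rule finite_subset[of _ "Pow {..<l}"]) (auto simp: index_subsets_def)

lemma finite_injections: "finite J \<Longrightarrow> finite (injections k J)"
  by (rule finite_subset[of _ "J \<rightarrow>\<^sub>E {..<k}"]) (auto simp: injections_def finite_PiE)

lemma finite_index_pairs: "finite (Sigma (index_subsets l h) (injections k))"
  by (intro finite_SigmaI finite_index_subsets finite_injections)
    (auto simp: index_subsets_def intro: finite_subset)

lemma index_subsetsD:
  assumes "J \<in> index_subsets l h"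
  shows "J \<subseteq> {..<l}" "h \<le> l" "length (kept_indices J l) = l - h"
proof -
  show "J \<subseteq> {..<l}" using assms by (simp add: index_subsets_def)
  moreover have "card J = h" using assms by (simp add: index_subsets_def)
  ultimately show "h \<le> l" "length (kept_indices J l) = l - h"
    using card_mono[of "{..<l}" J] by (auto simp: length_kept_indices)
qed

lemma prod_indicator_conv_all:
  "finite J \<Longrightarrow> (\<Prod>j\<in>J. if P j then 1 else 0 :: real) = (if \<forall>j\<in>J. P j then 1 else 0)"
  by (induction J rule: finite_induct) auto

lemma sum_injections_prod_indicator:
  assumes "finite J"
  shows "(\<Sum>i\<in>injections (length xs) J. \<Prod>j\<in>J. if ys ! j = xs ! i j then 1 else 0 :: real)
    = card (matchings xs ys J)"
proof -
  have "matchings xs ys J = {i \<in> injections (length xs) J. \<forall>j\<in>J. ys ! j = xs ! i j}"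
    by (auto simp: matchings_def injections_def)
  then show ?thesis
    using assms by (simp add: prod_indicator_conv_all sum.inter_filter[symmetric] finite_injections)
qed

lemma brace_eq_sum_matchings:
  "brace \<eta> h xs ys
    = (\<Sum>J\<in>index_subsets (length ys) h. falling \<eta> (concat_del xs ys J) * card (matchings xs ys J))"
  unfolding brace_def index_subsets_def injections_def[symmetric]
  by (intro sum.cong refl)
    (auto simp: sum_injections_prod_indicator dest: finite_subset[OF _ finite_lessThan])

lemma brace_eq_sum_index_pairs:
  "brace \<eta> h xs ys = (\<Sum>(J, i)\<in>Sigma (index_subsets (length ys) h) (injections (length xs)).
      falling \<eta> (concat_del xs ys J) * (if \<forall>j\<in>J. ys ! j = xs ! i j then 1 else 0))"
proof -
  have "brace \<eta> h xs ys = (\<Sum>J\<in>index_subsets (length ys) h. \<Sum>i\<in>injections (length xs) J.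
      falling \<eta> (concat_del xs ys J) * (if \<forall>j\<in>J. ys ! j = xs ! i j then 1 else 0))"
    unfolding brace_def index_subsets_def injections_def[symmetric]
  proof (intro sum.cong refl)
    fix J assume "J \<in> {J. J \<subseteq> {..<length ys} \<and> card J = h}"
    then have "finite J" using finite_subset by blast
    then show "falling \<eta> (concat_del xs ys J)
        * (\<Sum>i\<in>injections (length xs) J. \<Prod>j\<in>J. if ys ! j = xs ! i j then 1 else 0)
      = (\<Sum>i\<in>injections (length xs) J.
          falling \<eta> (concat_del xs ys J) * (if \<forall>j\<in>J. ys ! j = xs ! i j then 1 else 0))"
      by (simp add: prod_indicator_conv_all sum_distrib_left)
  qed
  also have "\<dots> = (\<Sum>(J, i)\<in>Sigma (index_subsets (length ys) h) (injections (length xs)).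
      falling \<eta> (concat_del xs ys J) * (if \<forall>j\<in>J. ys ! j = xs ! i j then 1 else 0))"
    by (intro sum.Sigma finite_index_subsets ballI finite_injections)
      (auto simp: index_subsets_def intro: finite_subset)
  finally show ?thesis .
qed

lemma sum_brace_eq_falling_mult: "(\<Sum>h\<le>length ys. brace \<eta> h xs ys) = falling \<eta> xs * falling \<eta> ys"
proof -
  have "(\<Sum>h\<le>length ys. brace \<eta> h xs ys)
      = (\<Sum>h\<in>{..length ys}. \<Sum>J\<in>{J \<in> Pow {..<length ys}. card J = h}.
          falling \<eta> (concat_del xs ys J) * card (matchings xs ys J))"
    by (simp add: brace_eq_sum_matchings index_subsets_def conj_commute)
  also have "\<dots> = (\<Sum>J\<in>Pow {..<length ys}. falling \<eta> (concat_del xs ys J) * card (matchings xs ys J))"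
    by (rule sum.group) (auto intro: card_mono[of "{..<length ys}", simplified])
  finally show ?thesis by (simp add: falling_mult_falling)
qed

section \<open>Schwartz functions of selected coordinates\<close>

definition subtuple :: "(nat \<Rightarrow> nat) \<Rightarrow> nat \<Rightarrow> 'a list \<Rightarrow> 'a list" where
  "subtuple \<pi> m v = map (\<lambda>p. v ! \<pi> p) [0..<m]"

lemma length_subtuple [simp]: "length (subtuple \<pi> m v) = m"
  by (simp add: subtuple_def)

lemma subtuple_in_tuples [simp]: "subtuple \<pi> m v \<in> tuples m"
  by (simp add: tuples_def)

lemma nth_subtuple [simp]: "p < m \<Longrightarrow> subtuple \<pi> m v ! p = v ! \<pi> p"
  by (simp add: subtuple_def)

lemma subtuple_update:
  assumes "inj_on \<pi> {..<m}" "\<pi> ` {..<m} \<subseteq> {..<length v}" "p < m"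
  shows "subtuple \<pi> m (v[\<pi> p := x]) = (subtuple \<pi> m v)[p := x]"
proof (rule nth_equalityI)
  fix q assume "q < length (subtuple \<pi> m (v[\<pi> p := x]))"
  then have "q < m" by simp
  moreover from this have "\<pi> q = \<pi> p \<longleftrightarrow> q = p" and "\<pi> q < length v"
    using assms by (auto simp: inj_on_def)
  ultimately show "subtuple \<pi> m (v[\<pi> p := x]) ! q = (subtuple \<pi> m v)[p := x] ! q"
    by (auto simp: nth_list_update)
qed simp

lemma subtuple_update_other:
  "j \<notin> \<pi> ` {..<m} \<Longrightarrow> subtuple \<pi> m (v[j := x]) = subtuple \<pi> m v"
  by (rule nth_equalityI) (auto simp: image_iff)

lemma schwartz_continuous:
  "schwartz k G \<Longrightarrow> xs \<in> tuples k \<Longrightarrow> e > 0 \<Longrightarrow>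
    \<exists>\<delta>>0. \<forall>ys\<in>tuples k. (\<Sum>j<k. norm (ys ! j - xs ! j)) < \<delta> \<longrightarrow> \<bar>G ys - G xs\<bar> < e"
  by (subst (asm) schwartz.simps) auto

lemma schwartz_rapid_decay:
  "schwartz k G \<Longrightarrow> \<exists>C. \<forall>xs\<in>tuples k. (1 + (\<Sum>j<k. norm (xs ! j))) ^ m * \<bar>G xs\<bar> \<le> C"
  by (subst (asm) schwartz.simps) auto

lemma schwartz_partial_exists:
  "schwartz k G \<Longrightarrow> p < k \<Longrightarrow> \<exists>G'. (\<forall>xs\<in>tuples k.
    ((\<lambda>t. G (xs[p := xs ! p + t *\<^sub>R axis c 1])) has_real_derivative G' xs) (at 0)) \<and> schwartz k G'"
  by (subst (asm) schwartz.simps) auto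

lemma schwartz_zero: "schwartz k (\<lambda>_. 0)"
proof -
  have "G = (\<lambda>_. 0) \<Longrightarrow> schwartz k G" for G :: "(real^'d) list \<Rightarrow> real"
    by (coinduction arbitrary: G rule: schwartz.coinduct) (auto intro!: exI[of _ "\<lambda>_. 0"])
  then show ?thesis by simp
qed

definition schwartz_partial ::
    "nat \<Rightarrow> ((real^'d) list \<Rightarrow> real) \<Rightarrow> nat \<Rightarrow> 'd \<Rightarrow> (real^'d) list \<Rightarrow> real" where
  "schwartz_partial k G p c = (SOME G'. (\<forall>xs\<in>tuples k.
     ((\<lambda>t. G (xs[p := xs ! p + t *\<^sub>R axis c 1])) has_real_derivative G' xs) (at 0)) \<and> schwartz k G')"

lemma has_real_derivative_schwartz_partial:
  "schwartz k G \<Longrightarrow> p < k \<Longrightarrow> xs \<in> tuples k \<Longrightarrow>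
    ((\<lambda>t. G (xs[p := xs ! p + t *\<^sub>R axis c 1])) has_real_derivative schwartz_partial k G p c xs) (at 0)"
  using someI_ex[OF schwartz_partial_exists] unfolding schwartz_partial_def by blast

lemma schwartz_schwartz_partial: "schwartz k G \<Longrightarrow> p < k \<Longrightarrow> schwartz k (schwartz_partial k G p c)"
  using someI_ex[OF schwartz_partial_exists] unfolding schwartz_partial_def by blast

text \<open>The partial derivative of \<open>v \<mapsto> G (subtuple \<pi> k v)\<close> along the \<open>c\<close>-th axis of the
  entry \<open>v ! j\<close>, as a function of \<open>subtuple \<pi> k v\<close>; it vanishes if \<open>j\<close> is not selected.\<close>

definition subtuple_partial ::
    "nat \<Rightarrow> ((real^'d) list \<Rightarrow> real) \<Rightarrow> (nat \<Rightarrow> nat) \<Rightarrow> nat \<Rightarrow> 'd \<Rightarrow> (real^'d) list \<Rightarrow> real" where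
  "subtuple_partial k G \<pi> j c =
    (if j \<in> \<pi> ` {..<k} then schwartz_partial k G (THE p. p < k \<and> \<pi> p = j) c else (\<lambda>_. 0))"

lemma subtuple_partial_eq:
  "inj_on \<pi> {..<k} \<Longrightarrow> p < k \<Longrightarrow> subtuple_partial k G \<pi> (\<pi> p) c = schwartz_partial k G p c"
  unfolding subtuple_partial_def by (subst the_equality) (auto simp: inj_on_def)

lemma schwartz_subtuple_partial:
  assumes "schwartz k G" "inj_on \<pi> {..<k}"
  shows "schwartz k (subtuple_partial k G \<pi> j c)"
proof (cases "j \<in> \<pi> ` {..<k}")
  case True
  then obtain p where "p < k" "j = \<pi> p" by auto
  then show ?thesis using assms by (simp add: subtuple_partial_eq schwartz_schwartz_partial)
qed (simp add: subtuple_partial_def schwartz_zero)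

lemma has_real_derivative_subtuple_partial:
  assumes G: "schwartz k G" and \<pi>: "inj_on \<pi> {..<k}" "\<pi> ` {..<k} \<subseteq> {..<n}" and v: "v \<in> tuples n"
  shows "((\<lambda>t. G (subtuple \<pi> k (v[j := v ! j + t *\<^sub>R axis c 1])))
    has_real_derivative subtuple_partial k G \<pi> j c (subtuple \<pi> k v)) (at 0)"
proof (cases "j \<in> \<pi> ` {..<k}")
  case True
  then obtain p where p: "p < k" "j = \<pi> p" by auto
  have "length v = n" using v by (simp add: tuples_def)
  then have "subtuple \<pi> k (v[j := v ! j + t *\<^sub>R axis c 1])
      = (subtuple \<pi> k v)[p := subtuple \<pi> k v ! p + t *\<^sub>R axis c 1]" for t
    using subtuple_update[OF \<pi>(1) _ p(1)] \<pi>(2) p by auto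
  then show ?thesis
    using has_real_derivative_schwartz_partial[OF G p(1) subtuple_in_tuples[of \<pi> k v], of c] p \<pi>(1)
    by (simp add: subtuple_partial_eq)
qed (simp add: subtuple_partial_def subtuple_update_other)

text \<open>Lists carry no topology, so the continuity required by \<open>schwartz\<close> is expressed through
  the following filter of \<open>\<ell>\<^sup>1\<close>-neighbourhoods within \<open>tuples n\<close>.\<close>

definition tuple_dist :: "nat \<Rightarrow> (real^'d) list \<Rightarrow> (real^'d) list \<Rightarrow> real" where
  "tuple_dist n w v = (\<Sum>j<n. norm (w ! j - v ! j))"

definition tuple_nhds :: "nat \<Rightarrow> (real^'d) list \<Rightarrow> (real^'d) list filter" where
  "tuple_nhds n v = (INF \<delta>\<in>{0<..}. principal {w \<in> tuples n. tuple_dist n w v < \<delta>})"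

lemma eventually_tuple_nhds:
  "eventually P (tuple_nhds n v) \<longleftrightarrow> (\<exists>\<delta>>0. \<forall>w\<in>tuples n. tuple_dist n w v < \<delta> \<longrightarrow> P w)"
  unfolding tuple_nhds_def
proof (subst eventually_INF_base)
  fix a b :: real assume "a \<in> {0<..}" "b \<in> {0<..}"
  then show "\<exists>x\<in>{0<..}. principal {w \<in> tuples n. tuple_dist n w v < x}
      \<le> inf (principal {w \<in> tuples n. tuple_dist n w v < a}) (principal {w \<in> tuples n. tuple_dist n w v < b})"
    by (intro bexI[of _ "min a b"]) auto
qed (auto simp: eventually_principal)

lemma tendsto_tuple_nhds_iff:
  fixes F :: "(real^'d) list \<Rightarrow> real"
  shows "(F \<longlongrightarrow> L) (tuple_nhds n v)
    \<longleftrightarrow> (\<forall>e>0. \<exists>\<delta>>0. \<forall>w\<in>tuples n. tuple_dist n w v < \<delta> \<longrightarrow> \<bar>F w - L\<bar> < e)"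
  by (simp add: tendsto_iff eventually_tuple_nhds dist_real_def)

lemma tuple_dist_subtuple_le:
  assumes "inj_on \<pi> {..<k}" "\<pi> ` {..<k} \<subseteq> {..<n}"
  shows "tuple_dist k (subtuple \<pi> k w) (subtuple \<pi> k v) \<le> tuple_dist n w v"
proof -
  have "tuple_dist k (subtuple \<pi> k w) (subtuple \<pi> k v) = (\<Sum>j\<in>\<pi> ` {..<k}. norm (w ! j - v ! j))"
    by (simp add: tuple_dist_def sum.reindex[OF assms(1)])
  also have "\<dots> \<le> tuple_dist n w v"
    unfolding tuple_dist_def using assms(2) by (intro sum_mono2) auto
  finally show ?thesis .
qed

lemma tendsto_schwartz_subtuple:
  assumes G: "schwartz k G" and \<pi>: "inj_on \<pi> {..<k}" "\<pi> ` {..<k} \<subseteq> {..<n}"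
  shows "((\<lambda>w. G (subtuple \<pi> k w)) \<longlongrightarrow> G (subtuple \<pi> k v)) (tuple_nhds n v)"
  unfolding tendsto_tuple_nhds_iff
proof (intro allI impI)
  fix e :: real assume "e > 0"
  then obtain \<delta> where "\<delta> > 0"
    and "\<forall>u\<in>tuples k. tuple_dist k u (subtuple \<pi> k v) < \<delta> \<longrightarrow> \<bar>G u - G (subtuple \<pi> k v)\<bar> < e"
    using schwartz_continuous[OF G subtuple_in_tuples] unfolding tuple_dist_def by blast
  then show "\<exists>\<delta>>0. \<forall>w\<in>tuples n. tuple_dist n w v < \<delta> \<longrightarrow> \<bar>G (subtuple \<pi> k w) - G (subtuple \<pi> k v)\<bar> < e"
    using tuple_dist_subtuple_le[OF \<pi>] by (meson le_less_trans subtuple_in_tuples)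
qed

definition covering_pair :: "nat \<Rightarrow> nat \<Rightarrow> nat \<Rightarrow> (nat \<Rightarrow> nat) \<Rightarrow> (nat \<Rightarrow> nat) \<Rightarrow> bool" where
  "covering_pair k l n \<pi> \<rho> \<longleftrightarrow>
     inj_on \<pi> {..<k} \<and> \<pi> ` {..<k} \<subseteq> {..<n} \<and> inj_on \<rho> {..<l} \<and> \<rho> ` {..<l} \<subseteq> {..<n}
     \<and> {..<n} \<subseteq> \<pi> ` {..<k} \<union> \<rho> ` {..<l}"

text \<open>By the product rule this class is closed under partial derivatives, which makes it an
  invariant for the coinductive definition of \<open>schwartz\<close>.\<close>

inductive tensor_sum :: "nat \<Rightarrow> nat \<Rightarrow> nat \<Rightarrow> ((real^'d) list \<Rightarrow> real) \<Rightarrow> bool" for k l n where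
  tensor_sum_zero: "tensor_sum k l n (\<lambda>_. 0)"
| tensor_sum_add: "schwartz k A \<Longrightarrow> schwartz l B \<Longrightarrow> covering_pair k l n \<pi> \<rho> \<Longrightarrow> tensor_sum k l n F \<Longrightarrow>
    tensor_sum k l n (\<lambda>v. A (subtuple \<pi> k v) * B (subtuple \<rho> l v) + F v)"

lemma tensor_sum_tendsto:
  "tensor_sum k l n F \<Longrightarrow> (F \<longlongrightarrow> F v) (tuple_nhds n v)"
proof (induction rule: tensor_sum.induct)
  case (tensor_sum_add A B \<pi> \<rho> F)
  then show ?case
    by (intro tendsto_add tendsto_mult tendsto_schwartz_subtuple) (auto simp: covering_pair_def)
qed simp

lemma sum_norm_le_subtuples:
  assumes "covering_pair k l n \<pi> \<rho>"
  shows "(\<Sum>j<n. norm (v ! j))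
    \<le> (\<Sum>p<k. norm (subtuple \<pi> k v ! p)) + (\<Sum>p<l. norm (subtuple \<rho> l v ! p))"
proof -
  have "(\<Sum>j<n. norm (v ! j)) \<le> (\<Sum>j\<in>\<pi> ` {..<k} \<union> \<rho> ` {..<l}. norm (v ! j))"
    using assms by (intro sum_mono2) (auto simp: covering_pair_def)
  also have "\<dots> \<le> (\<Sum>j\<in>\<pi> ` {..<k}. norm (v ! j)) + (\<Sum>j\<in>\<rho> ` {..<l}. norm (v ! j))"
    by (simp add: sum_Un sum_nonneg)
  also have "\<dots> = (\<Sum>p<k. norm (subtuple \<pi> k v ! p)) + (\<Sum>p<l. norm (subtuple \<rho> l v ! p))"
    using assms by (simp add: covering_pair_def sum.reindex)
  finally show ?thesis .
qed

lemma weight_le_subtuple_weights: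
  assumes "covering_pair k l n \<pi> \<rho>"
  shows "(1 + (\<Sum>j<n. norm (v ! j))) ^ M
    \<le> (1 + (\<Sum>p<k. norm (subtuple \<pi> k v ! p))) ^ M * (1 + (\<Sum>p<l. norm (subtuple \<rho> l v ! p))) ^ M"
proof -
  let ?a = "\<Sum>p<k. norm (subtuple \<pi> k v ! p)" and ?b = "\<Sum>p<l. norm (subtuple \<rho> l v ! p)"
  have "?a \<ge> 0" "?b \<ge> 0" by (auto intro: sum_nonneg)
  then have "1 + (\<Sum>j<n. norm (v ! j)) \<le> 1 + ?a + ?b + ?a * ?b"
    using sum_norm_le_subtuples[OF assms, of v] mult_nonneg_nonneg[of ?a ?b] by linarith
  also have "\<dots> = (1 + ?a) * (1 + ?b)" by (simp add: algebra_simps)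
  finally have "(1 + (\<Sum>j<n. norm (v ! j))) ^ M \<le> ((1 + ?a) * (1 + ?b)) ^ M"
    by (rule power_mono) (simp add: sum_nonneg)
  then show ?thesis by (simp only: power_mult_distrib)
qed

lemma rapid_decay_tensor:
  fixes A B :: "(real^'d) list \<Rightarrow> real"
  assumes "schwartz k A" "schwartz l B" "covering_pair k l n \<pi> \<rho>"
  shows "\<exists>C. \<forall>v\<in>tuples n. (1 + (\<Sum>j<n. norm (v ! j))) ^ M * \<bar>A (subtuple \<pi> k v) * B (subtuple \<rho> l v)\<bar> \<le> C"
proof -
  obtain CA where CA: "\<And>u. u \<in> tuples k \<Longrightarrow> (1 + (\<Sum>j<k. norm (u ! j))) ^ M * \<bar>A u\<bar> \<le> CA"
    using schwartz_rapid_decay[OF assms(1)] by blast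
  obtain CB where CB: "\<And>u. u \<in> tuples l \<Longrightarrow> (1 + (\<Sum>j<l. norm (u ! j))) ^ M * \<bar>B u\<bar> \<le> CB"
    using schwartz_rapid_decay[OF assms(2)] by blast
  have "(1 + (\<Sum>j<n. norm (v ! j))) ^ M * \<bar>A (subtuple \<pi> k v) * B (subtuple \<rho> l v)\<bar> \<le> CA * CB" for v
  proof -
    let ?wa = "(1 + (\<Sum>p<k. norm (subtuple \<pi> k v ! p))) ^ M"
      and ?wb = "(1 + (\<Sum>p<l. norm (subtuple \<rho> l v ! p))) ^ M"
    have a: "?wa * \<bar>A (subtuple \<pi> k v)\<bar> \<le> CA" and b: "?wb * \<bar>B (subtuple \<rho> l v)\<bar> \<le> CB"
      using CA[of "subtuple \<pi> k v"] CB[of "subtuple \<rho> l v"] by simp_all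
    have "0 \<le> ?wa * \<bar>A (subtuple \<pi> k v)\<bar>" "0 \<le> ?wb * \<bar>B (subtuple \<rho> l v)\<bar>"
      by (simp_all add: sum_nonneg)
    have "(1 + (\<Sum>j<n. norm (v ! j))) ^ M * \<bar>A (subtuple \<pi> k v) * B (subtuple \<rho> l v)\<bar>
        \<le> (?wa * ?wb) * \<bar>A (subtuple \<pi> k v) * B (subtuple \<rho> l v)\<bar>"
      using weight_le_subtuple_weights[OF assms(3)] by (rule mult_right_mono) simp
    also have "\<dots> = (?wa * \<bar>A (subtuple \<pi> k v)\<bar>) * (?wb * \<bar>B (subtuple \<rho> l v)\<bar>)"
      by (simp add: abs_mult mult_ac)
    also have "\<dots> \<le> CA * CB"
      using a b \<open>0 \<le> ?wa * \<bar>A (subtuple \<pi> k v)\<bar>\<close> \<open>0 \<le> ?wb * \<bar>B (subtuple \<rho> l v)\<bar>\<close>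
      by (intro mult_mono) auto
    finally show ?thesis .
  qed
  then show ?thesis by blast
qed

lemma tensor_sum_rapid_decay:
  "tensor_sum k l n F \<Longrightarrow> \<exists>C. \<forall>v\<in>tuples n. (1 + (\<Sum>j<n. norm (v ! j))) ^ M * \<bar>F v\<bar> \<le> C"
proof (induction rule: tensor_sum.induct)
  case (tensor_sum_add A B \<pi> \<rho> F)
  let ?w = "\<lambda>v. (1 + (\<Sum>j<n. norm (v ! j))) ^ M" and ?t = "\<lambda>v. A (subtuple \<pi> k v) * B (subtuple \<rho> l v)"
  obtain C1 where C1: "\<forall>v\<in>tuples n. ?w v * \<bar>?t v\<bar> \<le> C1"
    using rapid_decay_tensor[OF tensor_sum_add.hyps(1-3)] by blast
  obtain C2 where C2: "\<forall>v\<in>tuples n. ?w v * \<bar>F v\<bar> \<le> C2"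
    using tensor_sum_add.IH by blast
  have "?w v * \<bar>?t v + F v\<bar> \<le> C1 + C2" if "v \<in> tuples n" for v
  proof -
    have "?w v * \<bar>?t v + F v\<bar> \<le> ?w v * \<bar>?t v\<bar> + ?w v * \<bar>F v\<bar>"
      by (simp add: sum_nonneg abs_triangle_ineq mult_left_mono flip: distrib_left)
    also have "\<dots> \<le> C1 + C2" using C1 C2 that by (intro add_mono) auto
    finally show ?thesis .
  qed
  then show ?case by blast
qed auto

lemma tensor_sum_partial:
  assumes "tensor_sum k l n F"
  shows "\<exists>F'. (\<forall>v\<in>tuples n. ((\<lambda>t. F (v[j := v ! j + t *\<^sub>R axis c 1])) has_real_derivative F' v) (at 0))
    \<and> tensor_sum k l n F'"
  using assms
proof induction
  case tensor_sum_zero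
  show ?case by (intro exI[of _ "\<lambda>_. 0"] conjI tensor_sum.tensor_sum_zero) auto
next
  case (tensor_sum_add A B \<pi> \<rho> F)
  obtain F' where F': "\<And>v. v \<in> tuples n \<Longrightarrow>
      ((\<lambda>t. F (v[j := v ! j + t *\<^sub>R axis c 1])) has_real_derivative F' v) (at 0)"
    and "tensor_sum k l n F'"
    using tensor_sum_add.IH by blast
  let ?dA = "subtuple_partial k A \<pi> j c" and ?dB = "subtuple_partial l B \<rho> j c"
  define F'' where "F'' v = ?dA (subtuple \<pi> k v) * B (subtuple \<rho> l v)
    + (A (subtuple \<pi> k v) * ?dB (subtuple \<rho> l v) + F' v)" for v
  have \<pi>\<rho>: "inj_on \<pi> {..<k}" "\<pi> ` {..<k} \<subseteq> {..<n}" "inj_on \<rho> {..<l}" "\<rho> ` {..<l} \<subseteq> {..<n}"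
    using tensor_sum_add.hyps(3) by (auto simp: covering_pair_def)
  have "schwartz k ?dA" "schwartz l ?dB"
    using tensor_sum_add.hyps(1,2) \<pi>\<rho> by (auto intro: schwartz_subtuple_partial)
  then have "tensor_sum k l n F''"
    unfolding F''_def using tensor_sum_add.hyps \<open>tensor_sum k l n F'\<close>
    by (intro tensor_sum.tensor_sum_add[where A = ?dA and B = B and \<pi> = \<pi> and \<rho> = \<rho>]
        tensor_sum.tensor_sum_add[where A = A and B = ?dB and \<pi> = \<pi> and \<rho> = \<rho>])
  moreover have "((\<lambda>t. A (subtuple \<pi> k (v[j := v ! j + t *\<^sub>R axis c 1]))
      * B (subtuple \<rho> l (v[j := v ! j + t *\<^sub>R axis c 1])) + F (v[j := v ! j + t *\<^sub>R axis c 1]))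
    has_real_derivative F'' v) (at 0)"
    if v: "v \<in> tuples n" for v
  proof -
    have "((\<lambda>t. A (subtuple \<pi> k (v[j := v ! j + t *\<^sub>R axis c 1]))
        * B (subtuple \<rho> l (v[j := v ! j + t *\<^sub>R axis c 1])) + F (v[j := v ! j + t *\<^sub>R axis c 1]))
      has_real_derivative ?dA (subtuple \<pi> k v) * B (subtuple \<rho> l (v[j := v ! j + 0 *\<^sub>R axis c 1]))
        + ?dB (subtuple \<rho> l v) * A (subtuple \<pi> k (v[j := v ! j + 0 *\<^sub>R axis c 1])) + F' v) (at 0)"
      by (rule DERIV_add[OF DERIV_mult F'[OF v]]; rule has_real_derivative_subtuple_partial)
        (use tensor_sum_add.hyps \<pi>\<rho> v in auto)
    then show ?thesis by (simp add: F''_def mult.commute add.assoc)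
  qed
  ultimately show ?case by (intro exI[of _ F''] conjI ballI)
qed

lemma schwartz_tensor_sum:
  fixes F :: "(real^'d) list \<Rightarrow> real"
  assumes "tensor_sum k l n F"
  shows "schwartz n F"
  using assms
proof (coinduction arbitrary: F rule: schwartz.coinduct)
  case (schwartz F)
  have "\<forall>xs\<in>tuples n. \<forall>e>0. \<exists>\<delta>>0. \<forall>ys\<in>tuples n.
      (\<Sum>j<n. norm (ys ! j - xs ! j)) < \<delta> \<longrightarrow> \<bar>F ys - F xs\<bar> < e"
    using tensor_sum_tendsto[OF schwartz] by (simp add: tendsto_tuple_nhds_iff tuple_dist_def)
  moreover have "\<forall>m. \<exists>C. \<forall>xs\<in>tuples n. (1 + (\<Sum>j<n. norm (xs ! j))) ^ m * \<bar>F xs\<bar> \<le> C"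
    using tensor_sum_rapid_decay[OF schwartz] by blast
  moreover have "\<exists>G'. (\<forall>xs\<in>tuples n. ((\<lambda>t. F (xs[j := xs ! j + t *\<^sub>R axis c 1]))
      has_real_derivative G' xs) (at 0)) \<and> ((\<exists>F. G' = F \<and> tensor_sum k l n F) \<or> schwartz n G')"
    for j c
  proof -
    obtain G' where "\<forall>xs\<in>tuples n. ((\<lambda>t. F (xs[j := xs ! j + t *\<^sub>R axis c 1]))
        has_real_derivative G' xs) (at 0)" "tensor_sum k l n G'"
      using tensor_sum_partial[OF schwartz] by blast
    then show ?thesis by (intro exI[of _ G'] conjI disjI1) auto
  qed
  ultimately show ?case by simp
qed

lemma schwartz_tensor:
  assumes "schwartz k A" "schwartz l B" "covering_pair k l n \<pi> \<rho>"
  shows "schwartz n (\<lambda>v. A (subtuple \<pi> k v) * B (subtuple \<rho> l v))"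
proof -
  have "tensor_sum k l n (\<lambda>v. A (subtuple \<pi> k v) * B (subtuple \<rho> l v) + 0)"
    using assms tensor_sum_zero by (rule tensor_sum_add)
  then show ?thesis by (simp add: schwartz_tensor_sum)
qed

section \<open>Summability against factorial moments\<close>

lemma has_sum_sum_finite:
  fixes f :: "'b \<Rightarrow> 'a \<Rightarrow> real"
  assumes "finite A" "\<And>a. a \<in> A \<Longrightarrow> (f a has_sum s a) B"
  shows "((\<lambda>x. \<Sum>a\<in>A. f a x) has_sum (\<Sum>a\<in>A. s a)) B"
  using assms by (induction A rule: finite_induct) (auto intro: has_sum_add)

lemma infsum_infsum_eq_has_sum:
  fixes f :: "'a \<Rightarrow> 'b \<Rightarrow> real"
  assumes "((\<lambda>(x, y). f x y) has_sum S) (A \<times> B)"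
  shows "(\<Sum>\<^sub>\<infinity>x\<in>A. \<Sum>\<^sub>\<infinity>y\<in>B. f x y) = S"
  using infsum_Sigma'_banach[of f A "\<lambda>_. B"] assms by (auto simp: has_sum_iff)

lemma summable_on_product_nonneg:
  fixes a :: "'a \<Rightarrow> real" and b :: "'b \<Rightarrow> real"
  assumes "a summable_on A" "b summable_on B" "\<And>x. a x \<ge> 0" "\<And>y. b y \<ge> 0"
  shows "(\<lambda>(x, y). a x * b y) summable_on A \<times> B"
proof (rule summable_on_SigmaI[where g = "\<lambda>x. a x * infsum b B"])
  show "((\<lambda>y. case (x, y) of (x, y) \<Rightarrow> a x * b y) has_sum a x * infsum b B) B" for x
    using has_sum_cmult_right[OF has_sum_infsum[OF assms(2)]] by simp
  show "(\<lambda>x. a x * infsum b B) summable_on A"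
    by (rule summable_on_cmult_left[OF assms(1)])
qed (use assms in auto)

lemma summable_on_tuples_prod:
  fixes f :: "'a \<Rightarrow> real"
  assumes f: "f summable_on UNIV" "\<And>x. f x \<ge> 0"
  shows "(\<lambda>zs. \<Prod>j<n. f (zs ! j)) summable_on tuples n"
proof (induction n)
  case 0
  have "tuples 0 = {[] :: 'a list}" by (auto simp: tuples_def)
  then show ?case by simp
next
  case (Suc n)
  have tuples_Suc: "tuples (Suc n) = (\<lambda>(x, xs). x # xs) ` (UNIV \<times> tuples n)"
    by (auto simp: tuples_def image_iff length_Suc_conv)
  have inj: "inj_on (\<lambda>(x, xs). x # xs) (UNIV \<times> tuples n)" by (auto simp: inj_on_def)
  have "(\<lambda>zs. \<Prod>j<Suc n. f (zs ! j)) \<circ> (\<lambda>(x, xs). x # xs)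
      = (\<lambda>(x, xs). f x * (\<Prod>j<n. f (xs ! j)))"
    by (auto simp: prod.lessThan_Suc_shift simp del: prod.lessThan_Suc)
  moreover have "(\<lambda>(x, xs). f x * (\<Prod>j<n. f (xs ! j))) summable_on UNIV \<times> tuples n"
    using f Suc by (intro summable_on_product_nonneg) (auto intro: prod_nonneg)
  ultimately show ?case
    unfolding tuples_Suc summable_on_reindex[OF inj] by simp
qed

text \<open>A summable weight on \<open>(\<int>\<^sup>d)\<^sup>n\<close> that decays only like \<open>(1 + |z|)\<^bsup>-2nd\<^esup>\<close>: the rapid
  decay of a Schwartz function beats both this and the polynomial growth of \<open>[\<eta>]\<^sub>z\<close>.\<close>

definition int_weight :: "int \<Rightarrow> real" where
  "int_weight t = inverse ((1 + \<bar>real_of_int t\<bar>) ^ 2)"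

definition site_weight :: "int^'d \<Rightarrow> real" where
  "site_weight z = (\<Prod>c\<in>UNIV. int_weight (z $ c))"

definition tuple_weight :: "(int^'d) list \<Rightarrow> real" where
  "tuple_weight zs = (\<Prod>j<length zs. site_weight (zs ! j))"

lemma int_weight_nonneg: "int_weight t \<ge> 0"
  by (simp add: int_weight_def)

lemma site_weight_nonneg: "site_weight z \<ge> 0"
  by (simp add: site_weight_def prod_nonneg int_weight_nonneg)

lemma summable_int_weight: "int_weight summable_on UNIV"
proof -
  have "summable (\<lambda>n. inverse (real (Suc n) ^ 2))"
    using inverse_power_summable[of 2, where 'a = real] by (subst summable_Suc_iff) simp
  moreover have "int_weight \<circ> int = (\<lambda>n. inverse (real (Suc n) ^ 2))"
    by (auto simp: int_weight_def)
  ultimately have nonneg: "int_weight summable_on range int"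
    by (simp add: summable_on_reindex summable_on_UNIV_nonneg_real_iff)
  moreover have "int_weight \<circ> uminus = int_weight"
    by (auto simp: int_weight_def)
  then have "int_weight summable_on uminus ` range int"
    using nonneg by (simp add: summable_on_reindex)
  moreover have "range int \<union> uminus ` range int = UNIV"
    by (auto simp: image_iff) (metis int_cases)
  ultimately show ?thesis by (metis summable_on_union)
qed

lemma summable_site_weight: "(site_weight :: int^'d \<Rightarrow> real) summable_on UNIV"
proof -
  obtain cs :: "'d list" where cs: "set cs = UNIV" "distinct cs"
    using finite_distinct_list[of "UNIV :: 'd set"] by auto
  define coords where "coords z = map (($) z) cs" for z :: "int^'d"
  have "inj coords"
    by (rule injI) (use cs in \<open>auto simp: coords_def vec_eq_iff\<close>)
  have "bij_betw ((!) cs) {..<length cs} UNIV"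
    using bij_betw_nth[OF cs(2) refl] cs by simp
  then have site_weight_coords: "site_weight = (\<lambda>zs. \<Prod>j<length cs. int_weight (zs ! j)) \<circ> coords"
    by (auto simp: site_weight_def coords_def prod.reindex_bij_betw[symmetric])
  have "(\<lambda>zs. \<Prod>j<length cs. int_weight (zs ! j)) summable_on range coords"
    by (rule summable_on_subset_banach[OF summable_on_tuples_prod])
      (auto simp: tuples_def coords_def summable_int_weight int_weight_nonneg)
  then show ?thesis
    unfolding site_weight_coords using \<open>inj coords\<close> by (simp add: summable_on_reindex)
qed

lemma summable_tuple_weight: "(tuple_weight :: (int^'d) list \<Rightarrow> real) summable_on tuples n"
proof -
  have "(\<lambda>zs. \<Prod>j<n. site_weight (zs ! j)) summable_on (tuples n :: (int^'d) list set)"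
    by (rule summable_on_tuples_prod[OF summable_site_weight site_weight_nonneg])
  then show ?thesis by (rule summable_on_cong[THEN iffD1, rotated]) (auto simp: tuple_weight_def tuples_def)
qed

lemma tuple_weight_lower_bound:
  fixes z :: "(int^'d) list"
  assumes B: "\<And>j. j < length z \<Longrightarrow> 1 + norm (rvec (z ! j)) \<le> B"
  shows "1 \<le> B ^ (2 * length z * CARD('d)) * tuple_weight z"
proof -
  have "B ^ (2 * length z * CARD('d)) = ((B\<^sup>2) ^ CARD('d)) ^ length z"
    by (simp flip: power_mult) (simp add: mult_ac)
  then have "B ^ (2 * length z * CARD('d)) * tuple_weight z
      = (\<Prod>j<length z. \<Prod>c\<in>UNIV. B\<^sup>2 * int_weight (z ! j $ c))"
    by (simp add: tuple_weight_def site_weight_def prod.distrib)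
  also have "\<dots> \<ge> (\<Prod>j<length z. \<Prod>c\<in>(UNIV :: 'd set). 1)"
  proof (intro prod_mono conjI)
    fix j c assume j: "j \<in> {..<length z}"
    have "\<bar>real_of_int (z ! j $ c)\<bar> \<le> norm (rvec (z ! j))"
      using component_le_norm_cart[of "rvec (z ! j)" c] by (simp add: rvec_def)
    then have "1 + \<bar>real_of_int (z ! j $ c)\<bar> \<le> B" using B[of j] j by simp
    then have "(1 + \<bar>real_of_int (z ! j $ c)\<bar>)\<^sup>2 \<le> B\<^sup>2" by (rule power_mono) simp
    then show "1 \<le> B\<^sup>2 * int_weight (z ! j $ c)"
      by (simp add: int_weight_def field_simps)
  qed auto
  finally show ?thesis by simp
qed

lemma abs_falling_le:
  assumes \<eta>: "\<And>x. real (\<eta> x) \<le> m * (1 + norm (rvec x)) ^ q"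
    and B: "\<And>j. j < length z \<Longrightarrow> 1 + norm (rvec (z ! j)) \<le> B"
  shows "\<bar>falling \<eta> z\<bar> \<le> ((\<bar>m\<bar> + length z) * B ^ q) ^ length z"
proof -
  have "\<bar>falling \<eta> z\<bar> = (\<Prod>i<length z. \<bar>real (\<eta> (z ! i)) - real (card {j. j < i \<and> z ! j = z ! i})\<bar>)"
    by (simp add: falling_def abs_prod)
  also have "\<dots> \<le> (\<Prod>i<length z. (\<bar>m\<bar> + length z) * B ^ q)"
  proof (rule prod_mono)
    fix i assume i: "i \<in> {..<length z}"
    have "1 + norm (rvec (z ! i)) \<le> B" using B[of i] i by simp
    then have "1 \<le> B" using norm_ge_zero[of "rvec (z ! i)"] by linarith
    have "card {j. j < i \<and> z ! j = z ! i} \<le> card {..<i}" by (rule card_mono) auto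
    then have card: "real (card {j. j < i \<and> z ! j = z ! i}) \<le> length z * B ^ q"
      using i \<open>1 \<le> B\<close> by (simp add: order_trans[OF _ mult_left_mono[OF one_le_power]])
    have "real (\<eta> (z ! i)) \<le> \<bar>m\<bar> * (1 + norm (rvec (z ! i))) ^ q"
      using \<eta>[of "z ! i"] mult_right_mono[OF abs_ge_self[of m], of "(1 + norm (rvec (z ! i))) ^ q"]
      by simp
    also have "\<dots> \<le> \<bar>m\<bar> * B ^ q"
      using B[of i] i by (intro mult_left_mono power_mono) auto
    finally show "0 \<le> \<bar>real (\<eta> (z ! i)) - real (card {j. j < i \<and> z ! j = z ! i})\<bar> \<and>
        \<bar>real (\<eta> (z ! i)) - real (card {j. j < i \<and> z ! j = z ! i})\<bar> \<le> (\<bar>m\<bar> + length z) * B ^ q"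
      using card by (simp add: algebra_simps)
  qed
  finally show ?thesis by simp
qed

lemma rapid_decay_scale:
  fixes \<Phi> :: "(real^'d) list \<Rightarrow> real"
  assumes C: "\<And>v. v \<in> tuples n \<Longrightarrow> (1 + (\<Sum>j<n. norm (v ! j))) ^ K * \<bar>\<Phi> v\<bar> \<le> C"
    and N: "1 \<le> N" and z: "length z = n"
  shows "(1 + (\<Sum>j<n. norm (rvec (z ! j)))) ^ K * \<bar>\<Phi> (scale N z)\<bar> \<le> real N ^ K * C"
proof -
  let ?S = "\<Sum>j<n. norm (rvec (z ! j))"
  have "(\<Sum>j<n. norm (scale N z ! j)) = (\<Sum>j<n. norm (rvec (z ! j)) / real N)"
    using z N by (intro sum.cong) (auto simp: scale_def)
  then have "(\<Sum>j<n. norm (scale N z ! j)) = ?S / real N"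
    by (simp add: sum_divide_distrib)
  then have decay: "(1 + ?S / real N) ^ K * \<bar>\<Phi> (scale N z)\<bar> \<le> C"
    using C[of "scale N z"] z by (simp add: scale_def tuples_def)
  have "1 + ?S \<le> real N * (1 + ?S / real N)"
    using N by (simp add: distrib_left)
  then have "(1 + ?S) ^ K \<le> (real N * (1 + ?S / real N)) ^ K"
    by (rule power_mono) (simp add: sum_nonneg add_nonneg_nonneg)
  then have "(1 + ?S) ^ K \<le> real N ^ K * (1 + ?S / real N) ^ K"
    by (simp only: power_mult_distrib)
  then have "(1 + ?S) ^ K * \<bar>\<Phi> (scale N z)\<bar> \<le> (real N ^ K * (1 + ?S / real N) ^ K) * \<bar>\<Phi> (scale N z)\<bar>"
    by (rule mult_right_mono) simp
  also have "\<dots> = real N ^ K * ((1 + ?S / real N) ^ K * \<bar>\<Phi> (scale N z)\<bar>)"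
    by (simp only: mult.assoc)
  also have "\<dots> \<le> real N ^ K * C" using decay by (simp add: mult_left_mono)
  finally show ?thesis .
qed

lemma summable_schwartz_falling:
  fixes \<Phi> :: "(real^'d) list \<Rightarrow> real" and \<eta> :: "int^'d \<Rightarrow> nat"
  assumes \<Phi>: "schwartz n \<Phi>" and \<eta>: "poly_growth \<eta>" and N: "1 \<le> N"
  shows "(\<lambda>z. \<Phi> (scale N z) * falling \<eta> z) summable_on tuples n"
proof -
  obtain m q where growth: "\<And>x. real (\<eta> x) \<le> m * (1 + norm (rvec x)) ^ q"
    using \<eta> unfolding poly_growth_def by blast
  \<comment> \<open>\<open>q * n\<close> absorbs the growth of \<open>[\<eta>]\<^sub>z\<close> and \<open>2 * n * d\<close> the decay of the weight\<close>
  define K where "K = q * n + 2 * n * CARD('d)"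
  obtain C where C: "\<And>v. v \<in> tuples n \<Longrightarrow> (1 + (\<Sum>j<n. norm (v ! j))) ^ K * \<bar>\<Phi> v\<bar> \<le> C"
    using schwartz_rapid_decay[OF \<Phi>] by blast
  define C' where "C' = (\<bar>m\<bar> + real n) ^ n * (real N ^ K * C)"
  have "norm (\<Phi> (scale N z) * falling \<eta> z) \<le> C' * tuple_weight z" if z: "z \<in> tuples n" for z
  proof -
    have len: "length z = n" using z by (simp add: tuples_def)
    define B where "B = 1 + (\<Sum>j<n. norm (rvec (z ! j)))"
    have B: "1 + norm (rvec (z ! j)) \<le> B" if "j < length z" for j
      unfolding B_def using that len member_le_sum[of j "{..<n}" "\<lambda>j. norm (rvec (z ! j))"] by simp
    have "B \<ge> 1" by (simp add: B_def sum_nonneg)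
    have "\<bar>falling \<eta> z\<bar> \<le> ((\<bar>m\<bar> + n) * B ^ q) ^ n"
      using abs_falling_le[OF growth B] by (simp only: len)
    then have falling: "\<bar>falling \<eta> z\<bar> \<le> (\<bar>m\<bar> + real n) ^ n * B ^ (q * n)"
      by (simp only: power_mult_distrib power_mult)
    have weight: "1 \<le> B ^ (2 * n * CARD('d)) * tuple_weight z"
      using tuple_weight_lower_bound[OF B] by (simp only: len)
    have decay: "B ^ K * \<bar>\<Phi> (scale N z)\<bar> \<le> real N ^ K * C"
      unfolding B_def by (rule rapid_decay_scale[OF C N len])
    let ?x = "\<bar>\<Phi> (scale N z)\<bar> * ((\<bar>m\<bar> + real n) ^ n * B ^ (q * n))"
    have "0 \<le> ?x" using \<open>B \<ge> 1\<close> by simp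
    have "norm (\<Phi> (scale N z) * falling \<eta> z) \<le> ?x"
      unfolding real_norm_def abs_mult by (rule mult_left_mono[OF falling abs_ge_zero])
    also have "\<dots> \<le> ?x * (B ^ (2 * n * CARD('d)) * tuple_weight z)"
      using mult_left_mono[OF weight \<open>0 \<le> ?x\<close>] by simp
    also have "\<dots> = (\<bar>m\<bar> + real n) ^ n * tuple_weight z * (B ^ K * \<bar>\<Phi> (scale N z)\<bar>)"
      by (simp add: K_def power_add mult_ac)
    also have "\<dots> \<le> (\<bar>m\<bar> + real n) ^ n * tuple_weight z * (real N ^ K * C)"
      using decay by (intro mult_left_mono) (auto simp: tuple_weight_def prod_nonneg site_weight_nonneg)
    finally show ?thesis by (simp add: C'_def mult_ac)
  qed
  then have "(\<lambda>z. norm (\<Phi> (scale N z) * falling \<eta> z)) summable_on tuples n"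
    by (intro summable_on_comparison_test[OF summable_on_cmult_right[OF summable_tuple_weight]]) auto
  then show ?thesis by (rule summable_on_iff_abs_summable_on_real[THEN iffD2])
qed

section \<open>The contracted test functions\<close>

text \<open>The position of \<open>y\<^sub>j\<close> inside the glued tuple \<open>concat_del x y J\<close>: an identified entry
  \<open>y\<^sub>j = x\<^bsub>i j\<^esub>\<close> sits at \<open>i j\<close>, a kept one after the \<open>k\<close> entries of \<open>x\<close>.\<close>

definition merged_index :: "nat \<Rightarrow> nat set \<Rightarrow> (nat \<Rightarrow> nat) \<Rightarrow> nat \<Rightarrow> nat" where
  "merged_index k J i j = (if j \<in> J then i j else k + kept_rank J j)"

definition contraction :: "nat \<Rightarrow> nat \<Rightarrow> nat \<Rightarrow> ((real^'d) list \<Rightarrow> real) \<Rightarrow> ((real^'d) list \<Rightarrow> real)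
    \<Rightarrow> (real^'d) list \<Rightarrow> real" where
  "contraction k l h G H v = (\<Sum>(J, i)\<in>Sigma (index_subsets l h) (injections k).
     G (subtuple id k v) * H (subtuple (merged_index k J i) l v))"

lemma inj_on_merged_index:
  assumes "i \<in> injections k J"
  shows "inj_on (merged_index k J i) {..<l}"
proof (rule inj_onI)
  fix j1 j2 assume j: "j1 \<in> {..<l}" "j2 \<in> {..<l}" and eq: "merged_index k J i j1 = merged_index k J i j2"
  have ran: "i \<in> J \<rightarrow>\<^sub>E {..<k}" and inj: "inj_on i J" using assms by (auto simp: injections_def)
  consider "j1 \<in> J" "j2 \<in> J" | "j1 \<notin> J" "j2 \<notin> J"
    using eq ran by (auto simp: merged_index_def PiE_iff split: if_splits)
  then show "j1 = j2"
  proof cases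
    case 1
    then show ?thesis using eq inj by (simp add: merged_index_def inj_on_def)
  next
    case 2
    then have "kept_rank J j1 = kept_rank J j2" using eq by (simp add: merged_index_def)
    then show ?thesis using kept_indices_nth_kept_rank(2) j 2 by (metis lessThan_iff)
  qed
qed

lemma covering_pair_merged_index:
  assumes J: "J \<in> index_subsets l h" and i: "i \<in> injections k J"
  shows "covering_pair k l (k + l - h) id (merged_index k J i)"
proof -
  note h = index_subsetsD(2)[OF J] and kept = index_subsetsD(3)[OF J]
  have ran: "i \<in> J \<rightarrow>\<^sub>E {..<k}" using i by (auto simp: injections_def)
  have "merged_index k J i ` {..<l} \<subseteq> {..<k + l - h}"
  proof -
    have "k + kept_rank J j < k + l - h" if "j < l" "j \<notin> J" for j
      using kept_indices_nth_kept_rank(1)[OF that] kept h by linarith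
    then show ?thesis using ran h by (auto simp: merged_index_def PiE_iff)
  qed
  moreover have "{..<k + l - h} \<subseteq> {..<k} \<union> merged_index k J i ` {..<l}"
  proof
    fix x assume x: "x \<in> {..<k + l - h}"
    show "x \<in> {..<k} \<union> merged_index k J i ` {..<l}"
    proof (cases "x < k")
      case False
      then have q: "x - k < length (kept_indices J l)" using x kept h by auto
      define j where "j = kept_indices J l ! (x - k)"
      have "j \<in> set (kept_indices J l)" using q by (simp add: j_def)
      then have "j < l" "j \<notin> J" by (auto simp: set_kept_indices)
      moreover have "merged_index k J i j = x"
        using kept_rank_kept_indices_nth[OF q] False \<open>j \<notin> J\<close> by (simp add: merged_index_def j_def)
      ultimately show ?thesis by auto
    qed simp
  qed
  ultimately show ?thesis using h inj_on_merged_index[OF i] by (auto simp: covering_pair_def)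
qed

lemma tensor_sum_finite_sum:
  assumes "finite P"
    and "\<And>p. p \<in> P \<Longrightarrow> schwartz k (A p) \<and> schwartz l (B p) \<and> covering_pair k l n (\<pi> p) (\<rho> p)"
  shows "tensor_sum k l n (\<lambda>v. \<Sum>p\<in>P. A p (subtuple (\<pi> p) k v) * B p (subtuple (\<rho> p) l v))"
  using assms
proof (induction P rule: finite_induct)
  case empty
  show ?case by (simp add: tensor_sum_zero)
next
  case (insert p P)
  have "schwartz k (A p)" "schwartz l (B p)" "covering_pair k l n (\<pi> p) (\<rho> p)"
    using insert.prems by auto
  moreover have "tensor_sum k l n (\<lambda>v. \<Sum>p\<in>P. A p (subtuple (\<pi> p) k v) * B p (subtuple (\<rho> p) l v))"
    using insert.IH insert.prems by auto
  ultimately have "tensor_sum k l n (\<lambda>v. A p (subtuple (\<pi> p) k v) * B p (subtuple (\<rho> p) l v)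
      + (\<Sum>p\<in>P. A p (subtuple (\<pi> p) k v) * B p (subtuple (\<rho> p) l v)))"
    by (rule tensor_sum_add)
  then show ?case using insert.hyps by simp
qed

lemma schwartz_contraction:
  assumes "schwartz k G" "schwartz l H"
  shows "schwartz (k + l - h) (contraction k l h G H)"
proof -
  have "tensor_sum k l (k + l - h) (\<lambda>v. \<Sum>p\<in>Sigma (index_subsets l h) (injections k).
      G (subtuple id k v) * H (subtuple (merged_index k (fst p) (snd p)) l v))"
    by (rule tensor_sum_finite_sum[where A = "\<lambda>_. G" and B = "\<lambda>_. H" and \<pi> = "\<lambda>_. id"])
      (auto simp: finite_index_pairs assms covering_pair_merged_index)
  then show ?thesis
    unfolding contraction_def case_prod_beta by (rule schwartz_tensor_sum)
qed

section \<open>Reindexing the double sums\<close>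

definition matched_pairs :: "nat \<Rightarrow> nat \<Rightarrow> nat set \<Rightarrow> (nat \<Rightarrow> nat) \<Rightarrow> ('a list \<times> 'a list) set" where
  "matched_pairs k l J i = {(xs, ys). xs \<in> tuples k \<and> ys \<in> tuples l \<and> (\<forall>j\<in>J. ys ! j = xs ! i j)}"

lemma subtuple_id: "k \<le> length z \<Longrightarrow> subtuple id k z = take k z"
  by (rule nth_equalityI) auto

lemma concat_del_subtuple_merged_index:
  assumes J: "J \<in> index_subsets l h" and z: "z \<in> tuples (k + l - h)"
  shows "concat_del (subtuple id k z) (subtuple (merged_index k J i) l z) J = z"
proof -
  note h = index_subsetsD(2)[OF J] and kept = index_subsetsD(3)[OF J]
  have len: "length z = k + l - h" using z by (simp add: tuples_def)
  have "map ((!) (subtuple (merged_index k J i) l z)) (kept_indices J l)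
      = map (\<lambda>q. z ! (k + q)) (map (kept_rank J) (kept_indices J l))"
    by (auto simp: set_kept_indices merged_index_def)
  also have "\<dots> = drop k z"
    unfolding map_kept_rank_kept_indices by (rule nth_equalityI) (use len kept h in auto)
  finally show ?thesis using len h by (simp add: concat_del_eq subtuple_id)
qed

lemma subtuple_merged_index_concat_del:
  assumes i: "i \<in> injections k J" and xy: "(xs, ys) \<in> matched_pairs k l J i"
  shows "subtuple id k (concat_del xs ys J) = xs"
    and "subtuple (merged_index k J i) l (concat_del xs ys J) = ys"
proof -
  have lx: "length xs = k" and ly: "length ys = l" and match: "\<forall>j\<in>J. ys ! j = xs ! i j"
    using xy by (auto simp: matched_pairs_def tuples_def)
  have ran: "i \<in> J \<rightarrow>\<^sub>E {..<k}" using i by (auto simp: injections_def)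
  show "subtuple id k (concat_del xs ys J) = xs"
    using lx by (simp add: concat_del_eq subtuple_id)
  show "subtuple (merged_index k J i) l (concat_del xs ys J) = ys"
  proof (rule nth_equalityI)
    fix j assume "j < length (subtuple (merged_index k J i) l (concat_del xs ys J))"
    then have j: "j < l" by simp
    show "subtuple (merged_index k J i) l (concat_del xs ys J) ! j = ys ! j"
    proof (cases "j \<in> J")
      case True
      then show ?thesis using ran match j lx by (auto simp: merged_index_def concat_del_eq nth_append)
    next
      case False
      then show ?thesis
        using kept_indices_nth_kept_rank[OF j False] j lx ly
        by (simp add: merged_index_def concat_del_eq nth_append)
    qed
  qed (use ly in simp)
qed

lemma bij_betw_merged_index:
  assumes J: "J \<in> index_subsets l h" and i: "i \<in> injections k J"
  shows "bij_betw (\<lambda>z. (subtuple id k z, subtuple (merged_index k J i) l z))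
    (tuples (k + l - h)) (matched_pairs k l J i)"
proof (rule bij_betw_byWitness[where f' = "\<lambda>(xs, ys). concat_del xs ys J"])
  note Jl = index_subsetsD(1)[OF J] and h = index_subsetsD(2)[OF J]
    and kept = index_subsetsD(3)[OF J]
  have ran: "i \<in> J \<rightarrow>\<^sub>E {..<k}" using i by (auto simp: injections_def)
  show "\<forall>z\<in>tuples (k + l - h).
      (\<lambda>(xs, ys). concat_del xs ys J) (subtuple id k z, subtuple (merged_index k J i) l z) = z"
    by (simp add: concat_del_subtuple_merged_index[OF J])
  show "\<forall>p\<in>matched_pairs k l J i. (\<lambda>z. (subtuple id k z, subtuple (merged_index k J i) l z))
      ((\<lambda>(xs, ys). concat_del xs ys J) p) = p"
    using subtuple_merged_index_concat_del[OF i] by auto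
  show "(\<lambda>z. (subtuple id k z, subtuple (merged_index k J i) l z)) ` tuples (k + l - h)
      \<subseteq> matched_pairs k l J i"
    using ran Jl by (auto simp: matched_pairs_def tuples_def merged_index_def PiE_iff)
  show "(\<lambda>(xs, ys). concat_del xs ys J) ` matched_pairs k l J i \<subseteq> tuples (k + l - h)"
    using kept h by (auto simp: matched_pairs_def tuples_def concat_del_eq)
qed

lemma scale_subtuple:
  "\<pi> ` {..<m} \<subseteq> {..<length z} \<Longrightarrow> scale N (subtuple \<pi> m z) = subtuple \<pi> m (scale N z)"
  by (rule nth_equalityI) (auto simp: scale_def)

lemma summable_matched_term:
  fixes G H :: "(real^'d) list \<Rightarrow> real" and \<eta> :: "int^'d \<Rightarrow> nat"
  assumes G: "schwartz k G" and H: "schwartz l H" and \<eta>: "poly_growth \<eta>" and N: "1 \<le> N"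
    and J: "J \<in> index_subsets l h" and i: "i \<in> injections k J"
  shows "(\<lambda>z. G (subtuple id k (scale N z)) * H (subtuple (merged_index k J i) l (scale N z))
    * falling \<eta> z) summable_on tuples (k + l - h)"
  using summable_schwartz_falling[OF schwartz_tensor[OF G H covering_pair_merged_index[OF J i]] \<eta> N]
  by (simp add: mult.assoc)

lemma has_sum_matched_term:
  fixes G H :: "(real^'d) list \<Rightarrow> real" and \<eta> :: "int^'d \<Rightarrow> nat"
  assumes G: "schwartz k G" and H: "schwartz l H" and \<eta>: "poly_growth \<eta>" and N: "1 \<le> N"
    and J: "J \<in> index_subsets l h" and i: "i \<in> injections k J"
  shows "((\<lambda>(xs, ys). G (scale N xs) * H (scale N ys)
      * (falling \<eta> (concat_del xs ys J) * (if \<forall>j\<in>J. ys ! j = xs ! i j then 1 else 0)))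
    has_sum (\<Sum>\<^sub>\<infinity>z\<in>tuples (k + l - h).
      G (subtuple id k (scale N z)) * H (subtuple (merged_index k J i) l (scale N z)) * falling \<eta> z))
    (tuples k \<times> tuples l)"
proof -
  let ?n = "k + l - h" and ?\<rho> = "merged_index k J i"
  let ?f = "\<lambda>(xs, ys). G (scale N xs) * H (scale N ys) * falling \<eta> (concat_del xs ys J)"
  let ?g = "\<lambda>z. G (subtuple id k (scale N z)) * H (subtuple ?\<rho> l (scale N z)) * falling \<eta> z"
  have cover: "covering_pair k l ?n id ?\<rho>" by (rule covering_pair_merged_index[OF J i])
  have "(?g has_sum infsum ?g (tuples ?n)) (tuples ?n)"
    using summable_matched_term[OF G H \<eta> N J i] by (rule has_sum_infsum)
  moreover have "?g z = ?f (subtuple id k z, subtuple ?\<rho> l z)" if "z \<in> tuples ?n" for z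
  proof -
    have "id ` {..<k} \<subseteq> {..<length z}" "?\<rho> ` {..<l} \<subseteq> {..<length z}"
      using cover that by (auto simp: covering_pair_def tuples_def)
    then show ?thesis
      using that by (simp add: scale_subtuple concat_del_subtuple_merged_index[OF J])
  qed
  ultimately have "((\<lambda>z. ?f (subtuple id k z, subtuple ?\<rho> l z)) has_sum infsum ?g (tuples ?n)) (tuples ?n)"
    by (subst has_sum_cong[symmetric]) auto
  then have "(?f has_sum infsum ?g (tuples ?n)) (matched_pairs k l J i)"
    using has_sum_reindex_bij_betw[OF bij_betw_merged_index[OF J i], of ?f] by simp
  then show ?thesis
    by (rule has_sum_cong_neutral[THEN iffD1, rotated -1])
      (auto simp: matched_pairs_def split: if_splits)
qed

lemma has_sum_brace:
  fixes G H :: "(real^'d) list \<Rightarrow> real" and \<eta> :: "int^'d \<Rightarrow> nat"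
  assumes G: "schwartz k G" and H: "schwartz l H" and \<eta>: "poly_growth \<eta>" and N: "1 \<le> N"
  shows "((\<lambda>(xs, ys). G (scale N xs) * H (scale N ys) * brace \<eta> h xs ys)
    has_sum (\<Sum>\<^sub>\<infinity>z\<in>tuples (k + l - h). contraction k l h G H (scale N z) * falling \<eta> z))
    (tuples k \<times> tuples l)"
proof -
  let ?P = "Sigma (index_subsets l h) (injections k)"
  let ?f = "\<lambda>(J, i) (xs, ys). G (scale N xs) * H (scale N ys)
      * (falling \<eta> (concat_del xs ys J) * (if \<forall>j\<in>J. ys ! j = xs ! i j then 1 else 0))"
  let ?g = "\<lambda>(J, i) z. G (subtuple id k (scale N z)) * H (subtuple (merged_index k J i) l (scale N z))
      * falling \<eta> z"
  have "(?f p has_sum infsum (?g p) (tuples (k + l - h))) (tuples k \<times> tuples l)" if "p \<in> ?P" for p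
    using has_sum_matched_term[OF G H \<eta> N] that by (auto simp: case_prod_beta)
  then have "((\<lambda>x. \<Sum>p\<in>?P. ?f p x) has_sum (\<Sum>p\<in>?P. infsum (?g p) (tuples (k + l - h))))
      (tuples k \<times> tuples l)"
    by (intro has_sum_sum_finite finite_index_pairs)
  moreover have "(\<Sum>p\<in>?P. ?f p (xs, ys)) = G (scale N xs) * H (scale N ys) * brace \<eta> h xs ys"
    if "(xs, ys) \<in> tuples k \<times> tuples l" for xs ys
    using that by (simp add: brace_eq_sum_index_pairs sum_distrib_left case_prod_beta tuples_def)
  moreover have "(\<Sum>p\<in>?P. infsum (?g p) (tuples (k + l - h)))
      = (\<Sum>\<^sub>\<infinity>z\<in>tuples (k + l - h). contraction k l h G H (scale N z) * falling \<eta> z)"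
  proof -
    have "(?g p has_sum infsum (?g p) (tuples (k + l - h))) (tuples (k + l - h))" if "p \<in> ?P" for p
      using summable_matched_term[OF G H \<eta> N] that by (auto simp: case_prod_beta)
    then have "((\<lambda>z. \<Sum>p\<in>?P. ?g p z) has_sum (\<Sum>p\<in>?P. infsum (?g p) (tuples (k + l - h))))
        (tuples (k + l - h))"
      by (intro has_sum_sum_finite finite_index_pairs)
    moreover have "(\<Sum>p\<in>?P. ?g p z) = contraction k l h G H (scale N z) * falling \<eta> z" for z
      by (simp add: contraction_def sum_distrib_right case_prod_beta)
    ultimately show ?thesis by (simp add: has_sum_iff)
  qed
  ultimately show ?thesis
    by (subst has_sum_cong[symmetric]) (auto simp: case_prod_beta)
qed

lemma summand_eq_infsum_contraction:
  fixes G H :: "(real^'d) list \<Rightarrow> real" and \<eta> :: "int^'d \<Rightarrow> nat"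
  assumes "schwartz k G" "schwartz l H" "poly_growth \<eta>" "1 \<le> N"
  shows "summand k l G H \<eta> N h = 1 / real N ^ ((k + l) * CARD('d))
    * (\<Sum>\<^sub>\<infinity>z\<in>tuples (k + l - h). contraction k l h G H (scale N z) * falling \<eta> z)"
  unfolding summand_def
  using infsum_infsum_eq_has_sum[OF has_sum_brace[OF assms]] by simp

lemma summand_eq_pairing_contraction:
  fixes G H :: "(real^'d) list \<Rightarrow> real" and \<eta> :: "int^'d \<Rightarrow> nat"
  assumes "schwartz k G" "schwartz l H" "poly_growth \<eta>" "1 \<le> N" "h \<le> l"
  shows "summand k l G H \<eta> N h
    = 1 / real N ^ (h * CARD('d)) * pairing (k + l - h) (contraction k l h G H) \<eta> N"
proof -
  have "(k + l) * CARD('d) = h * CARD('d) + (k + l - h) * CARD('d)"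
    using assms(5) by (simp flip: add_mult_distrib)
  then show ?thesis
    by (simp add: summand_eq_infsum_contraction[OF assms(1-4)] pairing_def power_add)
qed

lemma pairing_mult_pairing:
  fixes G H :: "(real^'d) list \<Rightarrow> real" and \<eta> :: "int^'d \<Rightarrow> nat"
  assumes G: "schwartz k G" and H: "schwartz l H" and \<eta>: "poly_growth \<eta>" and N: "1 \<le> N"
  shows "pairing k G \<eta> N * pairing l H \<eta> N = (\<Sum>h\<le>l. summand k l G H \<eta> N h)"
proof -
  let ?V = "\<lambda>h. \<Sum>\<^sub>\<infinity>z\<in>tuples (k + l - h). contraction k l h G H (scale N z) * falling \<eta> z"
  let ?Gf = "\<lambda>xs. G (scale N xs) * falling \<eta> xs" and ?Hf = "\<lambda>ys. H (scale N ys) * falling \<eta> ys"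
  have "((\<lambda>p. \<Sum>h\<le>l. case p of (xs, ys) \<Rightarrow> G (scale N xs) * H (scale N ys) * brace \<eta> h xs ys)
      has_sum (\<Sum>h\<le>l. ?V h)) (tuples k \<times> tuples l)"
    by (intro has_sum_sum_finite finite_atMost has_sum_brace[OF G H \<eta> N])
  moreover have "(\<Sum>h\<le>l. case p of (xs, ys) \<Rightarrow> G (scale N xs) * H (scale N ys) * brace \<eta> h xs ys)
      = (case p of (xs, ys) \<Rightarrow> ?Gf xs * ?Hf ys)"
    if "p \<in> tuples k \<times> tuples l" for p
    using that sum_brace_eq_falling_mult[of \<eta> "fst p" "snd p"]
    by (auto simp: tuples_def mult_ac simp flip: sum_distrib_left)
  ultimately have "((\<lambda>(xs, ys). ?Gf xs * ?Hf ys) has_sum (\<Sum>h\<le>l. ?V h)) (tuples k \<times> tuples l)"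
    by (subst has_sum_cong[symmetric]) auto
  then have "(\<Sum>\<^sub>\<infinity>xs\<in>tuples k. \<Sum>\<^sub>\<infinity>ys\<in>tuples l. ?Gf xs * ?Hf ys) = (\<Sum>h\<le>l. ?V h)"
    by (rule infsum_infsum_eq_has_sum)
  then have "infsum ?Gf (tuples k) * infsum ?Hf (tuples l) = (\<Sum>h\<le>l. ?V h)"
    by (simp add: infsum_cmult_left' infsum_cmult_right')
  then show ?thesis
    by (simp add: pairing_def summand_eq_infsum_contraction[OF G H \<eta> N] power_add
        add_mult_distrib sum_divide_distrib)
qed

text \<open>The hypothesis \<open>l \<le> k\<close> is only a normalisation in the paper; the proof does not use it.\<close>

theorem lemma2p1:
  fixes k l :: nat
    and G H :: "(real^'d) list \<Rightarrow> real"
  assumes "l \<le> k"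
    and "schwartz k G" and "schwartz l H"
  shows "(\<forall>(\<eta>::int^'d \<Rightarrow> nat) N. poly_growth \<eta> \<longrightarrow> 1 \<le> N \<longrightarrow>
            pairing k G \<eta> N * pairing l H \<eta> N = (\<Sum>h\<le>l. summand k l G H \<eta> N h))
       \<and> (\<forall>h\<le>l. \<exists>F. schwartz (k + l - h) F \<and>
            (\<forall>(\<eta>::int^'d \<Rightarrow> nat) N. poly_growth \<eta> \<longrightarrow> 1 \<le> N \<longrightarrow>
               summand k l G H \<eta> N h
                 = (1 / real N ^ (h * CARD('d))) * pairing (k + l - h) F \<eta> N))"
proof (intro conjI allI impI)
  fix \<eta> :: "int^'d \<Rightarrow> nat" and N :: nat
  assume "poly_growth \<eta>" "1 \<le> N"
  then show "pairing k G \<eta> N * pairing l H \<eta> N = (\<Sum>h\<le>l. summand k l G H \<eta> N h)"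
    by (rule pairing_mult_pairing[OF assms(2,3)])
next
  fix h assume "h \<le> l"
  then show "\<exists>F. schwartz (k + l - h) F \<and>
      (\<forall>(\<eta>::int^'d \<Rightarrow> nat) N. poly_growth \<eta> \<longrightarrow> 1 \<le> N \<longrightarrow>
         summand k l G H \<eta> N h = (1 / real N ^ (h * CARD('d))) * pairing (k + l - h) F \<eta> N)"
    using schwartz_contraction[OF assms(2,3)] summand_eq_pairing_contraction[OF assms(2,3)]
    by (intro exI[of _ "contraction k l h G H"]) auto
qed

end
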